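(* Let $\bm{A}\in\mathbb{R}^{d\times K}$ with $K\le d$, let $g(\bm{Q})=\langle\bm{A},\bm{Q}\rangle+\delta_{{\rm St}(d,K)}(\bm{Q})$, and define $R:{\rm St}(d,K)\to\mathbb{R}^{d\times K}$ by $R(\bm{Q})=\bm{A}-\bm{Q}\bm{A}^T\bm{Q}$. Then for every $\bm{Q}\in{\rm St}(d,K)$, $$\operatorname{dist}(\bm{0},\partial g(\bm{Q}))=\Big\|\Big(\bm{I}_d-\tfrac12\bm{Q}\bm{Q}^T\Big)R(\bm{Q})\Big\|_F\quad\text{and}\quad\tfrac12\|R(\bm{Q})\|_F\le\operatorname{dist}(\bm{0},\partial g(\bm{Q}))\le\|R(\bm{Q})\|_F.$$ In particular, $\bm{Q}$ is a limiting critical point of $g$ (i.e. $\bm{0}\in\partial g(\bm{Q})$) if and only if $\bm{Q}\in{\rm St}(d,K)$ and $R(\bm{Q})=\bm{0}$.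
   Context: ${\rm St}(d,K)=\{\bm{Q}\in\mathbb{R}^{d\times K}:\bm{Q}^T\bm{Q}=\bm{I}_K\}$; $\langle\bm{A},\bm{B}\rangle=\operatorname{tr}(\bm{A}^T\bm{B})$; $\delta_{\mathcal{S}}$ is the indicator function of $\mathcal{S}$; $\partial$ denotes the limiting subdifferential; $\operatorname{dist}(\bm{0},S)=\inf_{\bm{s}\in S}\|\bm{s}\|_F$. *)

theory Defs
  imports "HOL-Analysis.Analysis"
begin

text \<open>d x K real matrices are represented as real^'k^'d (rows indexed by 'd, columns by 'k).
  The norm on this type is the Frobenius norm and the inner product is the Frobenius
  inner product tr(A^T B).\<close>

definition stiefel :: "(real^'k^'d) set" where
  "stiefel = {Q. transpose Q ** Q = mat 1}"

definition frechet_subdiff :: "('a::real_inner \<Rightarrow> ereal) \<Rightarrow> 'a \<Rightarrow> 'a set" where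
  "frechet_subdiff f x = {v. \<bar>f x\<bar> \<noteq> \<infinity> \<and>
     (\<forall>e>0. \<exists>\<delta>>0. \<forall>y. norm (y - x) < \<delta> \<longrightarrow>
        f y \<ge> f x + ereal (inner v (y - x)) - ereal (e * norm (y - x)))}"

definition limiting_subdiff :: "('a::real_inner \<Rightarrow> ereal) \<Rightarrow> 'a \<Rightarrow> 'a set" where
  "limiting_subdiff f x = {v. \<bar>f x\<bar> \<noteq> \<infinity> \<and>
     (\<exists>xs vs. xs \<longlonglongrightarrow> x \<and> (\<lambda>n. f (xs n)) \<longlonglongrightarrow> f x \<and>
        (\<forall>n. vs n \<in> frechet_subdiff f (xs n)) \<and> vs \<longlonglongrightarrow> v)}"

definition gfun :: "real^'k^'d \<Rightarrow> real^'k^'d \<Rightarrow> ereal" where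
  "gfun A Q = (if Q \<in> stiefel then ereal (inner A Q) else \<infinity>)"

definition Rmap :: "real^'k^'d \<Rightarrow> real^'k^'d \<Rightarrow> real^'k^'d" where
  "Rmap A Q = A - Q ** transpose A ** Q"

end

theory Submission
  imports Defs
begin

(* At a point Q of the Stiefel manifold, the Frechet normal cone is the space {Q S | S symmetric}.
   Such Q S are proximal normals, because Y^T Y = Q^T Q turns <Q S, Y - Q> into
   -1/2 <S, (Y - Q)^T (Y - Q)>. Conversely, rotating Q in the coordinate plane (e_i, e_j) gives a
   curve on the manifold with velocity (e_j e_i^T - e_i e_j^T) Q; a Frechet normal W is
   nonpositive against this velocity and its negative, which makes W Q^T symmetric. Symmetry of
   W Q^T survives limits, so the limiting subdifferential of g at Q is the affine space
   A + {Q S | S symmetric}. Its least-norm element is A - Q sym(Q^T A) = (I - Q Q^T/2) R(Q): its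
   Q^T-component is skew, hence orthogonal to every Q S. Finally (I - Q Q^T/2) R is the orthogonal
   sum of (I - Q Q^T) R and half of Q Q^T R, which gives the bounds. *)

lemma matrix_entry_eq_inner: "(X ** Y) $ i $ j = inner (X $ i) (column j (Y :: real^'p^'n))"
  by (simp add: matrix_matrix_mult_def inner_vec_def column_def)

lemma matrix_diff_ldistrib: "(A :: 'a::ring_1^'n^'m) ** (B - C) = A ** B - A ** C"
  by (simp add: matrix_matrix_mult_def vec_eq_iff sum_subtractf algebra_simps)

lemma matrix_diff_rdistrib: "((A :: 'a::ring_1^'n^'m) - B) ** C = A ** C - B ** C"
  by (simp add: matrix_matrix_mult_def vec_eq_iff sum_subtractf algebra_simps)

lemma matrix_uminus_right: "(A :: 'a::ring_1^'n^'m) ** (- B) = - (A ** B)"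
  by (simp add: matrix_matrix_mult_def vec_eq_iff sum_negf)

lemma transpose_add: "transpose (A + B) = transpose A + transpose (B :: 'a::plus^'n^'m)"
  by (simp add: transpose_def vec_eq_iff)

lemma transpose_diff: "transpose (A - B) = transpose A - transpose (B :: 'a::minus^'n^'m)"
  by (simp add: transpose_def vec_eq_iff)

lemma transpose_uminus: "transpose (- A) = - transpose (A :: 'a::uminus^'n^'m)"
  by (simp add: transpose_def vec_eq_iff)

lemma transpose_row: "transpose X $ j = column j X"
  by (simp add: transpose_def column_def)

lemma inner_matrix_mult_right:
  fixes X :: "real^'k^'d" and Q :: "real^'m^'d"
  shows "inner X (Q ** Y) = inner (transpose Q ** X) Y"
proof -
  have "inner X (Q ** Y) = (\<Sum>i\<in>UNIV. \<Sum>j\<in>UNIV. \<Sum>n\<in>UNIV. X$i$j * Q$i$n * Y$n$j)"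
    by (simp add: inner_vec_def matrix_matrix_mult_def sum_distrib_left mult.assoc)
  also have "\<dots> = (\<Sum>i\<in>UNIV. \<Sum>n\<in>UNIV. \<Sum>j\<in>UNIV. X$i$j * Q$i$n * Y$n$j)"
    by (rule sum.cong[OF refl], rule sum.swap)
  also have "\<dots> = (\<Sum>n\<in>UNIV. \<Sum>j\<in>UNIV. \<Sum>i\<in>UNIV. X$i$j * Q$i$n * Y$n$j)"
    by (subst sum.swap) (rule sum.cong[OF refl], rule sum.swap)
  also have "\<dots> = inner (transpose Q ** X) Y"
    by (simp add: inner_vec_def matrix_matrix_mult_def transpose_def sum_distrib_left
        sum_distrib_right mult_ac)
  finally show ?thesis .
qed

lemma inner_transpose: "inner (transpose X) (transpose Y) = inner (X :: real^'k^'d) Y"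
  unfolding inner_vec_def transpose_def by (simp, rule sum.swap)

lemma inner_columns: "inner X Y = (\<Sum>j\<in>UNIV. inner (column j X) (column j (Y :: real^'k^'d)))"
  unfolding inner_vec_def column_def by (simp, rule sum.swap)

lemma norm_transpose: "norm (transpose X) = norm (X :: real^'k^'d)"
  by (simp add: norm_eq_sqrt_inner inner_transpose)

lemma inner_skew_symmetric:
  fixes X Y :: "real^'k^'k"
  assumes "transpose X = - X" and "transpose Y = Y"
  shows "inner X Y = 0"
proof -
  have "inner X Y = inner (transpose X) (transpose Y)" by (simp add: inner_transpose)
  also have "\<dots> = - inner X Y" using assms by simp
  finally show ?thesis by simp
qed

lemma power2_norm_vec: "(norm x)\<^sup>2 = (\<Sum>i\<in>UNIV. (norm (x $ i))\<^sup>2)"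
  by (simp add: norm_vec_def L2_set_def sum_nonneg)

lemma norm_matrix_mult_le:
  fixes X :: "real^'n^'m" and Y :: "real^'p^'n"
  shows "norm (X ** Y) \<le> norm X * norm Y"
proof -
  have "(norm (X ** Y))\<^sup>2 = (\<Sum>i\<in>UNIV. \<Sum>j\<in>UNIV. (inner (X $ i) (column j Y))\<^sup>2)"
    by (simp add: power2_norm_vec[of "X ** Y"] power2_norm_vec[of "(X ** Y) $ _"]
        matrix_entry_eq_inner)
  also have "\<dots> \<le> (\<Sum>i\<in>UNIV. \<Sum>j\<in>UNIV. (norm (X $ i))\<^sup>2 * (norm (column j Y))\<^sup>2)"
  proof (intro sum_mono)
    fix i j
    have "(inner (X $ i) (column j Y))\<^sup>2 \<le> (norm (X $ i) * norm (column j Y))\<^sup>2"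
      by (subst abs_le_square_iff[symmetric]) (simp add: Cauchy_Schwarz_ineq2)
    then show "(inner (X $ i) (column j Y))\<^sup>2 \<le> (norm (X $ i))\<^sup>2 * (norm (column j Y))\<^sup>2"
      by (simp add: power_mult_distrib)
  qed
  also have "\<dots> = (\<Sum>i\<in>UNIV. (norm (X $ i))\<^sup>2) * (\<Sum>j\<in>UNIV. (norm (column j Y))\<^sup>2)"
    by (simp add: sum_product)
  also have "\<dots> = (norm X * norm Y)\<^sup>2"
    by (simp add: power2_norm_vec[of X] power2_norm_vec[of "transpose Y", unfolded norm_transpose]
        transpose_row power_mult_distrib)
  finally show ?thesis by (rule power2_le_imp_le) simp
qed

lemma tendsto_matrix_mult [tendsto_intros]:
  fixes f :: "'a \<Rightarrow> real^'n^'m" and g :: "'a \<Rightarrow> real^'p^'n"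
  assumes "(f \<longlongrightarrow> A) F" and "(g \<longlongrightarrow> B) F"
  shows "((\<lambda>x. f x ** g x) \<longlongrightarrow> A ** B) F"
  unfolding matrix_matrix_mult_def by (intro tendsto_intros assms)

lemma tendsto_transpose [tendsto_intros]:
  fixes f :: "'a \<Rightarrow> real^'n^'m"
  assumes "(f \<longlongrightarrow> A) F"
  shows "((\<lambda>x. transpose (f x)) \<longlongrightarrow> transpose A) F"
  unfolding transpose_def by (intro tendsto_intros assms)

definition frechet_normal :: "'a::real_inner set \<Rightarrow> 'a \<Rightarrow> 'a set" where
  "frechet_normal S x = {w. \<forall>e>0. \<exists>\<delta>>0. \<forall>y\<in>S.
     norm (y - x) < \<delta> \<longrightarrow> inner w (y - x) \<le> e * norm (y - x)}"

lemma frechet_subdiff_linear_plus_indicator: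
  fixes a :: "'a::real_inner"
  assumes "x \<in> S"
  shows "frechet_subdiff (\<lambda>y. if y \<in> S then ereal (inner a y) else \<infinity>) x
       = {v. v - a \<in> frechet_normal S x}"
proof -
  have "ereal (inner a x) + ereal (inner v (y - x)) - ereal (e * norm (y - x)) \<le> ereal (inner a y)
      \<longleftrightarrow> inner (v - a) (y - x) \<le> e * norm (y - x)" for v y e
    by (simp add: inner_diff_left inner_diff_right algebra_simps)
  then have "(\<forall>y. norm (y - x) < \<delta> \<longrightarrow> ereal (inner a x) + ereal (inner v (y - x))
        - ereal (e * norm (y - x)) \<le> (if y \<in> S then ereal (inner a y) else \<infinity>))
      \<longleftrightarrow> (\<forall>y\<in>S. norm (y - x) < \<delta> \<longrightarrow> inner (v - a) (y - x) \<le> e * norm (y - x))"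
    for v \<delta> e
    by auto
  then show ?thesis
    using assms by (simp add: frechet_subdiff_def frechet_normal_def)
qed

lemma frechet_subdiff_subset_limiting_subdiff: "frechet_subdiff f x \<subseteq> limiting_subdiff f x"
proof
  fix v assume v: "v \<in> frechet_subdiff f x"
  have "\<exists>xs vs. xs \<longlonglongrightarrow> x \<and> (\<lambda>n. f (xs n)) \<longlonglongrightarrow> f x
      \<and> (\<forall>n. vs n \<in> frechet_subdiff f (xs n)) \<and> vs \<longlonglongrightarrow> v"
    by (rule exI[of _ "\<lambda>_. x"], rule exI[of _ "\<lambda>_. v"]) (simp add: v)
  moreover have "\<bar>f x\<bar> \<noteq> \<infinity>" using v by (simp add: frechet_subdiff_def)
  ultimately show "v \<in> limiting_subdiff f x"
    by (simp add: limiting_subdiff_def)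
qed

lemma frechet_normal_if_quadratic_bound:
  assumes bound: "\<And>y. y \<in> S \<Longrightarrow> inner w (y - x) \<le> C * (norm (y - x))\<^sup>2"
  shows "w \<in> frechet_normal S x"
  unfolding frechet_normal_def
proof (intro CollectI allI impI)
  fix e :: real assume "e > 0"
  show "\<exists>\<delta>>0. \<forall>y\<in>S. norm (y - x) < \<delta> \<longrightarrow> inner w (y - x) \<le> e * norm (y - x)"
  proof (intro exI[of _ "e / (\<bar>C\<bar> + 1)"] conjI ballI impI)
    show "e / (\<bar>C\<bar> + 1) > 0" using \<open>e > 0\<close> by simp
    fix y assume "y \<in> S" and close: "norm (y - x) < e / (\<bar>C\<bar> + 1)"
    have "C * norm (y - x) \<le> \<bar>C\<bar> * (e / (\<bar>C\<bar> + 1))"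
      using close by (intro order.trans[OF mult_right_mono mult_left_mono]) auto
    also have "\<dots> \<le> e" using \<open>e > 0\<close> by (simp add: field_simps)
    finally have "C * norm (y - x) * norm (y - x) \<le> e * norm (y - x)"
      by (simp add: mult_right_mono)
    with bound[OF \<open>y \<in> S\<close>] show "inner w (y - x) \<le> e * norm (y - x)"
      by (simp add: power2_eq_square mult.assoc)
  qed
qed

lemma frechet_normal_inner_tangent_nonpos:
  fixes \<gamma> :: "real \<Rightarrow> 'a::real_inner"
  assumes w: "w \<in> frechet_normal S x" and curve: "\<And>t. t > 0 \<Longrightarrow> \<gamma> t \<in> S"
    and tangent: "((\<lambda>t. (\<gamma> t - x) /\<^sub>R t) \<longlongrightarrow> \<xi>) (at_right 0)"
  shows "inner w \<xi> \<le> 0"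
proof -
  have "((\<lambda>t. x + t *\<^sub>R ((\<gamma> t - x) /\<^sub>R t)) \<longlongrightarrow> x + 0 *\<^sub>R \<xi>) (at_right 0)"
    by (intro tendsto_intros tangent)
  moreover have "\<forall>\<^sub>F t in at_right 0. x + t *\<^sub>R ((\<gamma> t - x) /\<^sub>R t) = \<gamma> t"
    using eventually_at_right_less[of "0::real"] by eventually_elim simp
  ultimately have \<gamma>: "(\<gamma> \<longlongrightarrow> x) (at_right 0)"
    by (auto intro: Lim_transform_eventually)
  have bound: "inner w \<xi> \<le> e * norm \<xi>" if "e > 0" for e
  proof -
    obtain \<delta> where "\<delta> > 0"
      and \<delta>: "\<forall>y\<in>S. norm (y - x) < \<delta> \<longrightarrow> inner w (y - x) \<le> e * norm (y - x)"
      using w \<open>e > 0\<close> by (auto simp: frechet_normal_def)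
    have ev: "\<forall>\<^sub>F t in at_right 0. inner w ((\<gamma> t - x) /\<^sub>R t) \<le> e * norm ((\<gamma> t - x) /\<^sub>R t)"
      using tendstoD[OF \<gamma> \<open>\<delta> > 0\<close>] eventually_at_right_less
    proof eventually_elim
      case (elim t)
      then have "inner w (\<gamma> t - x) \<le> e * norm (\<gamma> t - x)"
        using \<delta> curve by (simp add: dist_norm)
      with \<open>t > 0\<close> show ?case
        by (simp add: divide_right_mono)
    qed
    have "((\<lambda>t. e * norm ((\<gamma> t - x) /\<^sub>R t)) \<longlongrightarrow> e * norm \<xi>) (at_right 0)"
      and "((\<lambda>t. inner w ((\<gamma> t - x) /\<^sub>R t)) \<longlongrightarrow> inner w \<xi>) (at_right 0)"
      by (intro tendsto_intros tangent)+
    from tendsto_le[OF trivial_limit_at_right_real this ev] show ?thesis .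
  qed
  have "((\<lambda>e. e * norm \<xi>) \<longlongrightarrow> 0) (at_right 0)"
    by (auto intro!: tendsto_eq_intros)
  moreover have "\<forall>\<^sub>F e in at_right 0. inner w \<xi> \<le> e * norm \<xi>"
    using eventually_at_right_less by (rule eventually_mono) (rule bound)
  ultimately show ?thesis
    by (rule tendsto_lowerbound) simp
qed

lemma infdist_zero_eq_norm_if_orthogonal:
  fixes p :: "'a::real_inner"
  assumes p: "p \<in> X" and orthogonal: "\<And>v. v \<in> X \<Longrightarrow> inner p (v - p) = 0"
  shows "infdist 0 X = norm p"
proof (rule antisym)
  show "infdist 0 X \<le> norm p"
    using infdist_le[OF p, of 0] by simp
  have "norm p \<le> dist 0 v" if "v \<in> X" for v
  proof -
    have "(norm v)\<^sup>2 = (norm p)\<^sup>2 + (norm (v - p))\<^sup>2"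
      using norm_add_Pythagorean[of p "v - p"] orthogonal[OF that] by (simp add: orthogonal_def)
    then show ?thesis by (simp add: power2_le_imp_le)
  qed
  moreover have "X \<noteq> {}" using p by blast
  ultimately show "norm p \<le> infdist 0 X"
    by (simp add: infdist_notempty cINF_greatest)
qed

definition plane_rotation :: "'a::real_inner \<Rightarrow> 'a \<Rightarrow> real \<Rightarrow> 'a \<Rightarrow> 'a" where
  "plane_rotation a b t x = x
     + ((cos t - 1) * inner a x - sin t * inner b x) *\<^sub>R a
     + ((cos t - 1) * inner b x + sin t * inner a x) *\<^sub>R b"

lemma inner_plane_rotation:
  assumes "inner a a = 1" and "inner b b = 1" and "inner a b = 0"
  shows "inner (plane_rotation a b t x) (plane_rotation a b t y) = inner x y"
proof -
  have cos_cos: "cos t * (cos t * z) = z - sin t * (sin t * z)" for z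
    using sin_cos_squared_add3[of t] by algebra
  show ?thesis
    using assms unfolding plane_rotation_def
    by (simp add: inner_add_left inner_add_right inner_commute algebra_simps cos_cos)
qed

definition map_columns :: "(real^'m \<Rightarrow> real^'n) \<Rightarrow> real^'k^'m \<Rightarrow> real^'k^'n" where
  "map_columns f X = (\<chi> i j. f (column j X) $ i)"

lemma column_map_columns [simp]: "column j (map_columns f X) = f (column j X)"
  by (simp add: map_columns_def column_def vec_eq_iff)

lemma map_columns_plane_rotation_tangent:
  "((\<lambda>t. (map_columns (plane_rotation a b t) X - X) /\<^sub>R t)
      \<longlongrightarrow> map_columns (\<lambda>x. inner a x *\<^sub>R b - inner b x *\<^sub>R a) X) (at_right 0)"
proof -
  let ?P = "map_columns (\<lambda>x. inner a x *\<^sub>R a + inner b x *\<^sub>R b) X"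
  let ?J = "map_columns (\<lambda>x. inner a x *\<^sub>R b - inner b x *\<^sub>R a) X"
  have "map_columns (plane_rotation a b t) X - X = (cos t - 1) *\<^sub>R ?P + sin t *\<^sub>R ?J" for t
    by (simp add: vec_eq_iff map_columns_def plane_rotation_def column_def algebra_simps)
  then have quotient: "(map_columns (plane_rotation a b t) X - X) /\<^sub>R t
      = ((cos t - 1) / t) *\<^sub>R ?P + (sin t / t) *\<^sub>R ?J" for t
    by (simp add: scaleR_add_right divide_inverse_commute)
  have "((\<lambda>t. (cos t - 1) / t) \<longlongrightarrow> 0) (at_right (0::real))"
    by (rule tendsto_mono[OF at_within_le_at]) (use DERIV_D[OF DERIV_cos[of "0::real"]] in simp)
  moreover have "((\<lambda>t. sin t / t) \<longlongrightarrow> 1) (at_right (0::real))"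
    by (rule tendsto_mono[OF at_within_le_at]) (use DERIV_D[OF DERIV_sin[of "0::real"]] in simp)
  ultimately have "((\<lambda>t. ((cos t - 1) / t) *\<^sub>R ?P + (sin t / t) *\<^sub>R ?J) \<longlongrightarrow> 0 *\<^sub>R ?P + 1 *\<^sub>R ?J)
      (at_right 0)"
    by (intro tendsto_intros)
  then show ?thesis by (simp add: quotient)
qed

lemma stiefel_iff_orthonormal_columns:
  "Q \<in> stiefel \<longleftrightarrow> (\<forall>i j. inner (column i Q) (column j Q) = (if i = j then 1 else 0))"
  unfolding stiefel_def matrix_mult_transpose_dot_column by (simp add: vec_eq_iff mat_def)

lemma stiefel_transpose_mult_cancel: "Q \<in> stiefel \<Longrightarrow> transpose Q ** (Q ** X) = X"
  by (simp add: stiefel_def matrix_mul_assoc)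

lemma map_columns_plane_rotation_stiefel:
  assumes "Q \<in> stiefel" and "inner a a = 1" and "inner b b = 1" and "inner a b = 0"
  shows "map_columns (plane_rotation a b t) Q \<in> stiefel"
  using assms by (simp add: stiefel_iff_orthonormal_columns inner_plane_rotation)

definition stiefel_normal :: "real^'k^'d \<Rightarrow> (real^'k^'d) set" where
  "stiefel_normal Q = {Q ** S | S. transpose S = S}"

lemma stiefel_normal_iff:
  assumes Q: "Q \<in> stiefel"
  shows "W \<in> stiefel_normal Q \<longleftrightarrow> W ** transpose Q = Q ** transpose W"
proof
  assume "W \<in> stiefel_normal Q"
  then obtain S where "transpose S = S" and "W = Q ** S"
    by (auto simp: stiefel_normal_def)
  then show "W ** transpose Q = Q ** transpose W"
    by (simp add: matrix_transpose_mul matrix_mul_assoc)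
next
  assume sym: "W ** transpose Q = Q ** transpose W"
  have W: "W = Q ** (transpose W ** Q)"
  proof -
    have "W = (W ** transpose Q) ** Q"
      using Q by (simp add: stiefel_def flip: matrix_mul_assoc)
    then show ?thesis by (simp add: sym matrix_mul_assoc)
  qed
  have "transpose Q ** W = transpose W ** Q"
    using Q by (subst W) (simp add: stiefel_transpose_mult_cancel)
  then have "transpose (transpose W ** Q) = transpose W ** Q"
    by (simp add: matrix_transpose_mul)
  with W show "W \<in> stiefel_normal Q"
    by (auto simp: stiefel_normal_def)
qed

lemma stiefel_normal_diff:
  assumes "W \<in> stiefel_normal Q" and "V \<in> stiefel_normal Q"
  shows "W - V \<in> stiefel_normal Q"
proof -
  obtain S T where "transpose S = S" "W = Q ** S" "transpose T = T" "V = Q ** T"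
    using assms by (auto simp: stiefel_normal_def)
  then have "W - V = Q ** (S - T)" and "transpose (S - T) = S - T"
    by (simp_all add: matrix_diff_ldistrib transpose_diff)
  then show ?thesis by (auto simp: stiefel_normal_def)
qed

lemma inner_stiefel_normal_le:
  fixes Q Y :: "real^'k^'d"
  assumes Q: "Q \<in> stiefel" and Y: "Y \<in> stiefel" and S: "transpose S = S"
  shows "inner (Q ** S) (Y - Q) \<le> norm S / 2 * (norm (Y - Q))\<^sup>2"
proof -
  define H where "H = Y - Q"
  have second_order: "transpose Q ** H + transpose H ** Q = - (transpose H ** H)"
    using Q Y unfolding stiefel_def H_def
    by (simp add: matrix_diff_ldistrib matrix_diff_rdistrib transpose_diff algebra_simps)
  have "inner S (transpose Q ** H) = inner S (transpose H ** Q)"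
    using inner_transpose[of S "transpose Q ** H"] by (simp add: S matrix_transpose_mul)
  then have "2 * inner (Q ** S) H = inner S (transpose Q ** H + transpose H ** Q)"
    by (simp add: inner_commute[of "Q ** S"] inner_matrix_mult_right inner_add_right)
  also have "\<dots> = - inner S (transpose H ** H)"
    by (simp add: second_order)
  also have "\<dots> \<le> norm S * norm (transpose H ** H)"
    using Cauchy_Schwarz_ineq2[of S "transpose H ** H"] by linarith
  also have "\<dots> \<le> norm S * (norm H)\<^sup>2"
    using norm_matrix_mult_le[of "transpose H" H]
    by (simp add: norm_transpose power2_eq_square mult_left_mono)
  finally show ?thesis by (simp add: H_def)
qed

lemma stiefel_normal_subset_frechet_normal:
  assumes Q: "Q \<in> stiefel"
  shows "stiefel_normal Q \<subseteq> frechet_normal stiefel Q"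
proof
  fix W assume "W \<in> stiefel_normal Q"
  then obtain S where "transpose S = S" and "W = Q ** S"
    by (auto simp: stiefel_normal_def)
  then show "W \<in> frechet_normal stiefel Q"
    using Q by (auto intro!: frechet_normal_if_quadratic_bound[where C = "norm S / 2"]
        inner_stiefel_normal_le)
qed

lemma frechet_normal_stiefel_subset:
  fixes Q W :: "real^'k^'d"
  assumes Q: "Q \<in> stiefel" and W: "W \<in> frechet_normal stiefel Q"
  shows "W \<in> stiefel_normal Q"
proof -
  have le: "(W ** transpose Q) $ j $ i \<le> (W ** transpose Q) $ i $ j" if "i \<noteq> j" for i j
  proof -
    let ?a = "axis i 1 :: real^'d" and ?b = "axis j 1 :: real^'d"
    have "inner W (map_columns (\<lambda>x. inner ?a x *\<^sub>R ?b - inner ?b x *\<^sub>R ?a) Q) \<le> 0"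
      using that
      by (intro frechet_normal_inner_tangent_nonpos[OF W map_columns_plane_rotation_stiefel[OF Q]
            map_columns_plane_rotation_tangent]) (simp_all add: inner_axis_axis)
    moreover have "inner W (map_columns (\<lambda>x. inner ?a x *\<^sub>R ?b - inner ?b x *\<^sub>R ?a) Q)
        = (W ** transpose Q) $ j $ i - (W ** transpose Q) $ i $ j"
      by (simp add: inner_columns inner_diff_right inner_axis' inner_axis)
        (simp add: column_def matrix_matrix_mult_def transpose_def sum_subtractf mult.commute)
    ultimately show ?thesis by simp
  qed
  have "(W ** transpose Q) $ i $ j = (W ** transpose Q) $ j $ i" for i j
    using le[of i j] le[of j i] by (cases "i = j") auto
  then have "transpose (W ** transpose Q) = W ** transpose Q"
    by (simp add: vec_eq_iff transpose_def)
  then show ?thesis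
    using stiefel_normal_iff[OF Q] by (simp add: matrix_transpose_mul)
qed

lemma frechet_normal_stiefel: "Q \<in> stiefel \<Longrightarrow> frechet_normal stiefel Q = stiefel_normal Q"
  using frechet_normal_stiefel_subset stiefel_normal_subset_frechet_normal by blast

lemma gfun_eq: "gfun A = (\<lambda>Q. if Q \<in> stiefel then ereal (inner A Q) else \<infinity>)"
  by (simp add: fun_eq_iff gfun_def)

lemma frechet_subdiff_gfun:
  "Q \<in> stiefel \<Longrightarrow> frechet_subdiff (gfun A) Q = {v. v - A \<in> stiefel_normal Q}"
  by (simp add: gfun_eq frechet_subdiff_linear_plus_indicator frechet_normal_stiefel)

lemma limiting_subdiff_gfun_outside: "Q \<notin> stiefel \<Longrightarrow> limiting_subdiff (gfun A) Q = {}"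
  by (simp add: limiting_subdiff_def gfun_def)

lemma limiting_subdiff_gfun:
  assumes Q: "Q \<in> stiefel"
  shows "limiting_subdiff (gfun A) Q = {v. v - A \<in> stiefel_normal Q}"
proof
  show "{v. v - A \<in> stiefel_normal Q} \<subseteq> limiting_subdiff (gfun A) Q"
    using frechet_subdiff_subset_limiting_subdiff frechet_subdiff_gfun[OF Q] by blast
next
  show "limiting_subdiff (gfun A) Q \<subseteq> {v. v - A \<in> stiefel_normal Q}"
  proof
    fix v assume "v \<in> limiting_subdiff (gfun A) Q"
    then obtain Qs vs where Qs: "Qs \<longlonglongrightarrow> Q" and vs: "vs \<longlonglongrightarrow> v"
      and frechet: "\<And>n. vs n \<in> frechet_subdiff (gfun A) (Qs n)"
      by (auto simp: limiting_subdiff_def)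
    have "Qs n \<in> stiefel" for n
      using frechet[of n] by (auto simp: frechet_subdiff_def gfun_def split: if_splits)
    then have "(vs n - A) ** transpose (Qs n) - Qs n ** transpose (vs n - A) = 0" for n
      using frechet[of n] by (simp add: frechet_subdiff_gfun stiefel_normal_iff)
    moreover have "(\<lambda>n. (vs n - A) ** transpose (Qs n) - Qs n ** transpose (vs n - A))
        \<longlonglongrightarrow> (v - A) ** transpose Q - Q ** transpose (v - A)"
      by (intro tendsto_intros Qs vs)
    ultimately have "(v - A) ** transpose Q = Q ** transpose (v - A)"
      by (simp add: LIMSEQ_const_iff)
    then show "v \<in> {v. v - A \<in> stiefel_normal Q}"
      by (simp add: stiefel_normal_iff[OF Q])
  qed
qed

lemma half_projection_Rmap_eq:
  assumes Q: "Q \<in> stiefel"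
  shows "(mat 1 - (1/2) *\<^sub>R (Q ** transpose Q)) ** Rmap A Q
       = A - Q ** ((1/2) *\<^sub>R (transpose Q ** A + transpose A ** Q))"
proof -
  have "(Q ** transpose Q) ** ((Q ** transpose A) ** Q) = (Q ** transpose A) ** Q"
    using Q by (simp add: stiefel_def matrix_mul_assoc flip: matrix_mul_assoc[of Q "transpose Q"])
  then show ?thesis
    by (simp add: Rmap_def matrix_diff_rdistrib matrix_diff_ldistrib matrix_add_ldistrib
        matrix_scalar_ac matrix_mul_assoc scalar_matrix_assoc[symmetric] algebra_simps)
qed

lemma half_projection_Rmap_orthogonal:
  assumes Q: "Q \<in> stiefel" and W: "W \<in> stiefel_normal Q"
  shows "inner ((mat 1 - (1/2) *\<^sub>R (Q ** transpose Q)) ** Rmap A Q) W = 0"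
proof -
  let ?K = "(1/2) *\<^sub>R (transpose Q ** A - transpose A ** Q)"
  obtain S where S: "transpose S = S" and W: "W = Q ** S"
    using W by (auto simp: stiefel_normal_def)
  have "transpose Q ** ((mat 1 - (1/2) *\<^sub>R (Q ** transpose Q)) ** Rmap A Q) = ?K"
    using Q by (simp add: half_projection_Rmap_eq matrix_diff_ldistrib stiefel_transpose_mult_cancel
        algebra_simps)
  moreover have "transpose ?K = - ?K"
    by (simp add: transpose_scalar transpose_diff matrix_transpose_mul scaleR_diff_right)
  then have "inner ?K S = 0"
    using S by (rule inner_skew_symmetric)
  ultimately show ?thesis
    by (simp add: W inner_matrix_mult_right)
qed

lemma half_projection_Rmap_mem_limiting_subdiff:
  assumes Q: "Q \<in> stiefel"
  shows "(mat 1 - (1/2) *\<^sub>R (Q ** transpose Q)) ** Rmap A Q \<in> limiting_subdiff (gfun A) Q"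
proof -
  define S where "S = (1/2) *\<^sub>R (transpose Q ** A + transpose A ** Q)"
  have "transpose (- S) = - S"
    by (simp add: S_def transpose_uminus transpose_scalar transpose_add matrix_transpose_mul
        add.commute)
  then have "Q ** (- S) \<in> stiefel_normal Q"
    by (auto simp: stiefel_normal_def)
  then show ?thesis
    by (simp add: limiting_subdiff_gfun[OF Q] half_projection_Rmap_eq[OF Q] S_def
        matrix_uminus_right)
qed

lemma infdist_limiting_subdiff_gfun:
  assumes Q: "Q \<in> stiefel"
  shows "infdist 0 (limiting_subdiff (gfun A) Q)
       = norm ((mat 1 - (1/2) *\<^sub>R (Q ** transpose Q)) ** Rmap A Q)"
proof (rule infdist_zero_eq_norm_if_orthogonal)
  let ?P = "(mat 1 - (1/2) *\<^sub>R (Q ** transpose Q)) ** Rmap A Q"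
  show P: "?P \<in> limiting_subdiff (gfun A) Q"
    by (rule half_projection_Rmap_mem_limiting_subdiff[OF Q])
  fix v assume "v \<in> limiting_subdiff (gfun A) Q"
  then have "v - A \<in> stiefel_normal Q" and "?P - A \<in> stiefel_normal Q"
    using P by (simp_all add: limiting_subdiff_gfun[OF Q])
  then have "v - ?P \<in> stiefel_normal Q"
    using stiefel_normal_diff by fastforce
  then show "inner ?P (v - ?P) = 0"
    by (rule half_projection_Rmap_orthogonal[OF Q])
qed

lemma norm_half_projection_bounds:
  fixes Q :: "real^'k^'d" and R :: "real^'m^'d"
  assumes Q: "Q \<in> stiefel"
  shows "(1/2) * norm R \<le> norm ((mat 1 - (1/2) *\<^sub>R (Q ** transpose Q)) ** R)"
    and "norm ((mat 1 - (1/2) *\<^sub>R (Q ** transpose Q)) ** R) \<le> norm R"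
proof -
  define V where "V = Q ** (transpose Q ** R)"
  define U where "U = R - V"
  have "inner U V = 0"
    using Q by (simp add: U_def V_def inner_matrix_mult_right matrix_diff_ldistrib
        stiefel_transpose_mult_cancel)
  then have orth: "orthogonal U V" and orth_half: "orthogonal U ((1/2) *\<^sub>R V)"
    by (simp_all add: orthogonal_def)
  have R: "(norm R)\<^sup>2 = (norm U)\<^sup>2 + (norm V)\<^sup>2"
    using norm_add_Pythagorean[OF orth] by (simp add: U_def)
  have "(mat 1 - (1/2) *\<^sub>R (Q ** transpose Q)) ** R = U + (1/2) *\<^sub>R V"
    by (simp add: U_def V_def matrix_diff_rdistrib scalar_matrix_assoc[symmetric] matrix_mul_assoc)
  moreover have "(norm (U + (1/2) *\<^sub>R V))\<^sup>2 = (norm U)\<^sup>2 + (norm V)\<^sup>2 / 4"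
    using norm_add_Pythagorean[OF orth_half] by (simp add: power_divide)
  ultimately have P: "(norm ((mat 1 - (1/2) *\<^sub>R (Q ** transpose Q)) ** R))\<^sup>2
      = (norm U)\<^sup>2 + (norm V)\<^sup>2 / 4"
    by simp
  show "(1/2) * norm R \<le> norm ((mat 1 - (1/2) *\<^sub>R (Q ** transpose Q)) ** R)"
    by (rule power2_le_imp_le)
      (use zero_le_power2[of "norm U"] in \<open>simp_all add: P R power_divide\<close>)
  show "norm ((mat 1 - (1/2) *\<^sub>R (Q ** transpose Q)) ** R) \<le> norm R"
    by (rule power2_le_imp_le) (simp_all add: P R)
qed

theorem proposition1:
  fixes A :: "real^'k^'d"
  assumes "CARD('k) \<le> CARD('d)"
  shows "(\<forall>Q\<in>stiefel.
            infdist 0 (limiting_subdiff (gfun A) Q)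
              = norm ((mat 1 - (1/2) *\<^sub>R (Q ** transpose Q)) ** Rmap A Q)
          \<and> (1/2) * norm (Rmap A Q) \<le> infdist 0 (limiting_subdiff (gfun A) Q)
          \<and> infdist 0 (limiting_subdiff (gfun A) Q) \<le> norm (Rmap A Q))
       \<and> (\<forall>Q. 0 \<in> limiting_subdiff (gfun A) Q \<longleftrightarrow> Q \<in> stiefel \<and> Rmap A Q = 0)"
proof (intro conjI ballI allI)
  fix Q :: "real^'k^'d" assume Q: "Q \<in> stiefel"
  show "infdist 0 (limiting_subdiff (gfun A) Q)
      = norm ((mat 1 - (1/2) *\<^sub>R (Q ** transpose Q)) ** Rmap A Q)"
    by (rule infdist_limiting_subdiff_gfun[OF Q])
  then show "(1/2) * norm (Rmap A Q) \<le> infdist 0 (limiting_subdiff (gfun A) Q)"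
    and "infdist 0 (limiting_subdiff (gfun A) Q) \<le> norm (Rmap A Q)"
    using norm_half_projection_bounds[OF Q, of "Rmap A Q"] by simp_all
next
  fix Q :: "real^'k^'d"
  let ?P = "(mat 1 - (1/2) *\<^sub>R (Q ** transpose Q)) ** Rmap A Q"
  show "0 \<in> limiting_subdiff (gfun A) Q \<longleftrightarrow> Q \<in> stiefel \<and> Rmap A Q = 0"
  proof (cases "Q \<in> stiefel")
    case False
    then show ?thesis by (simp add: limiting_subdiff_gfun_outside)
  next
    case Q: True
    have "0 \<in> limiting_subdiff (gfun A) Q \<longleftrightarrow> norm ?P = 0"
      using half_projection_Rmap_mem_limiting_subdiff[OF Q, of A]
        infdist_limiting_subdiff_gfun[OF Q, of A] by auto
    also have "\<dots> \<longleftrightarrow> Rmap A Q = 0"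
      using norm_half_projection_bounds[OF Q, of "Rmap A Q"] by auto
    finally show ?thesis using Q by simp
  qed
qed

end
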